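(* Let $\mathcal{R}$ be a commutative ring with unity, $P$ a locally finite poset and $b$ an additive biderivation of $I(P,\mathcal{R})$. For any $x<y<z$ in $P$: (1) $b_{xy}(e_{xy},e_{xx})=b_{yz}(e_{yz},e_{yy})=b_{xz}(e_{xz},e_{xx})$; (2) $b_{xy}(e_{xx},e_{xy})=b_{yz}(e_{yy},e_{yz})=b_{xz}(e_{xx},e_{xz})$.
   Context: $I(P,\mathcal{R})$ is the incidence algebra: functions $f:P\times P\to\mathcal{R}$ with $f(x,y)=0$ unless $x\le y$, with product $(fg)(x,y)=\sum_{x\le z\le y}f(x,z)g(z,y)$; $e_{xy}$ ($x\le y$) is the function equal to $1$ at $(x,y)$ and $0$ elsewhere. An additive biderivation is a map $b$ of two arguments, additive in each, with $b(\alpha\beta,\gamma)=\alpha b(\beta,\gamma)+b(\alpha,\gamma)\beta$ and $b(\alpha,\beta\gamma)=\beta b(\alpha,\gamma)+b(\alpha,\beta)\gamma$. Write $b_{pq}(\alpha,\beta)=b(\alpha,\beta)(p,q)$. *)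

theory Defs
  imports Main
begin

text \<open>The poset P is the ordered type 'a; it is locally finite when all closed
intervals are finite.\<close>
definition locally_finite_poset :: "'a::order itself \<Rightarrow> bool" where
  "locally_finite_poset _ \<longleftrightarrow> (\<forall>x y::'a. finite {x..y})"

definition incidence :: "('a::order \<Rightarrow> 'a \<Rightarrow> 'r::comm_ring_1) set" where
  "incidence = {f. \<forall>x y. \<not> x \<le> y \<longrightarrow> f x y = 0}"

definition inc_add :: "('a::order \<Rightarrow> 'a \<Rightarrow> 'r::comm_ring_1) \<Rightarrow> ('a \<Rightarrow> 'a \<Rightarrow> 'r) \<Rightarrow> ('a \<Rightarrow> 'a \<Rightarrow> 'r)" where
  "inc_add f g = (\<lambda>x y. f x y + g x y)"

definition inc_mult :: "('a::order \<Rightarrow> 'a \<Rightarrow> 'r::comm_ring_1) \<Rightarrow> ('a \<Rightarrow> 'a \<Rightarrow> 'r) \<Rightarrow> ('a \<Rightarrow> 'a \<Rightarrow> 'r)" where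
  "inc_mult f g = (\<lambda>x y. \<Sum>z\<in>{x..y}. f x z * g z y)"

definition inc_e :: "'a::order \<Rightarrow> 'a \<Rightarrow> ('a \<Rightarrow> 'a \<Rightarrow> 'r::comm_ring_1)" where
  "inc_e x y = (\<lambda>u v. if u = x \<and> v = y then 1 else 0)"

definition additive_biderivation ::
  "(('a::order \<Rightarrow> 'a \<Rightarrow> 'r::comm_ring_1) \<Rightarrow> ('a \<Rightarrow> 'a \<Rightarrow> 'r) \<Rightarrow> ('a \<Rightarrow> 'a \<Rightarrow> 'r)) \<Rightarrow> bool" where
  "additive_biderivation b \<longleftrightarrow>
     (\<forall>\<alpha>\<in>incidence. \<forall>\<beta>\<in>incidence. b \<alpha> \<beta> \<in> incidence) \<and>
     (\<forall>\<alpha>\<in>incidence. \<forall>\<beta>\<in>incidence. \<forall>\<gamma>\<in>incidence.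
        b (inc_add \<alpha> \<beta>) \<gamma> = inc_add (b \<alpha> \<gamma>) (b \<beta> \<gamma>) \<and>
        b \<alpha> (inc_add \<beta> \<gamma>) = inc_add (b \<alpha> \<beta>) (b \<alpha> \<gamma>) \<and>
        b (inc_mult \<alpha> \<beta>) \<gamma> = inc_add (inc_mult \<alpha> (b \<beta> \<gamma>)) (inc_mult (b \<alpha> \<gamma>) \<beta>) \<and>
        b \<alpha> (inc_mult \<beta> \<gamma>) = inc_add (inc_mult \<beta> (b \<alpha> \<gamma>)) (inc_mult (b \<alpha> \<beta>) \<gamma>))"

end

theory Submission
  imports Defs
begin

text \<open>Write \<open>e\<^sub>u\<^sub>v\<close> for \<open>inc_e u v\<close>. From \<open>e\<^sub>x\<^sub>z = e\<^sub>x\<^sub>y e\<^sub>y\<^sub>z\<close> and the derivation rule in the first argument,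
  \<open>b\<^sub>x\<^sub>z(e\<^sub>x\<^sub>z, \<gamma>) = b\<^sub>y\<^sub>z(e\<^sub>y\<^sub>z, \<gamma>) + b\<^sub>x\<^sub>y(e\<^sub>x\<^sub>y, \<gamma>)\<close>. For \<open>\<gamma> = e\<^sub>a\<^sub>a\<close> the value \<open>b\<^sub>p\<^sub>q(\<alpha>, e\<^sub>a\<^sub>a)\<close> vanishes
  unless \<open>a \<in> {p, q}\<close> (since \<open>e\<^sub>a\<^sub>a\<close> is idempotent), and \<open>e\<^sub>x\<^sub>x e\<^sub>y\<^sub>y = 0\<close> gives
  \<open>b\<^sub>x\<^sub>y(\<alpha>, e\<^sub>x\<^sub>x) = - b\<^sub>x\<^sub>y(\<alpha>, e\<^sub>y\<^sub>y)\<close>. Taking \<open>\<gamma> = e\<^sub>x\<^sub>x\<close> and \<open>\<gamma> = e\<^sub>y\<^sub>y\<close> yields (1).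
  Swapping the arguments of a biderivation gives again a biderivation, which turns (1) into (2).\<close>

lemma locally_finite_posetD: "locally_finite_poset TYPE('a::order) \<Longrightarrow> finite {x..y::'a}"
  unfolding locally_finite_poset_def by blast

lemma inc_e_in_incidence: "a \<le> c \<Longrightarrow> (inc_e a c :: 'a::order \<Rightarrow> 'a \<Rightarrow> 'r::comm_ring_1) \<in> incidence"
  unfolding incidence_def inc_e_def by auto

lemma zero_in_incidence: "(\<lambda>_ _. 0) \<in> (incidence :: ('a::order \<Rightarrow> 'a \<Rightarrow> 'r::comm_ring_1) set)"
  unfolding incidence_def by auto

lemma inc_mult_inc_e_left:
  assumes "finite {p..q}"
  shows "inc_mult (inc_e a c) f p q = (if p = a \<and> a \<le> c \<and> c \<le> q then f c q else (0::'r::comm_ring_1))"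
proof -
  have "inc_mult (inc_e a c) f p q = (\<Sum>z\<in>{p..q}. if z = c then (if p = a then f z q else 0) else 0)"
    unfolding inc_mult_def inc_e_def by (rule sum.cong) auto
  also have "\<dots> = (if c \<in> {p..q} then (if p = a then f c q else 0) else 0)"
    using assms by (simp add: sum.delta')
  finally show ?thesis by auto
qed

lemma inc_mult_inc_e_right:
  assumes "finite {p..q}"
  shows "inc_mult f (inc_e a c) p q = (if q = c \<and> p \<le> a \<and> a \<le> c then f p a else (0::'r::comm_ring_1))"
proof -
  have "inc_mult f (inc_e a c) p q = (\<Sum>z\<in>{p..q}. if z = a then (if q = c then f p z else 0) else 0)"
    unfolding inc_mult_def inc_e_def by (rule sum.cong) auto
  also have "\<dots> = (if a \<in> {p..q} then (if q = c then f p a else 0) else 0)"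
    using assms by (simp add: sum.delta')
  finally show ?thesis by auto
qed

lemma inc_mult_inc_e_inc_e:
  fixes a c c' d :: "'a::order"
  assumes "locally_finite_poset TYPE('a)"
  shows "inc_mult (inc_e a c) (inc_e c' d) =
    (if c = c' \<and> a \<le> c \<and> c \<le> d then inc_e a d else (\<lambda>_ _. 0 :: 'r::comm_ring_1))"
  using locally_finite_posetD[OF assms]
  by (auto simp: fun_eq_iff inc_mult_inc_e_left) (auto simp: inc_e_def)

lemma additive_biderivation_swap:
  "additive_biderivation b \<Longrightarrow> additive_biderivation (\<lambda>\<alpha> \<beta>. b \<beta> \<alpha>)"
  unfolding additive_biderivation_def by blast

lemma biderivation_mult_left_apply:
  assumes "additive_biderivation b" "\<alpha> \<in> incidence" "\<beta> \<in> incidence" "\<gamma> \<in> incidence"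
  shows "b (inc_mult \<alpha> \<beta>) \<gamma> p q = inc_mult \<alpha> (b \<beta> \<gamma>) p q + inc_mult (b \<alpha> \<gamma>) \<beta> p q"
  using assms unfolding additive_biderivation_def inc_add_def by metis

lemma biderivation_mult_right_apply:
  assumes "additive_biderivation b" "\<alpha> \<in> incidence" "\<beta> \<in> incidence" "\<gamma> \<in> incidence"
  shows "b \<alpha> (inc_mult \<beta> \<gamma>) p q = inc_mult \<beta> (b \<alpha> \<gamma>) p q + inc_mult (b \<alpha> \<beta>) \<gamma> p q"
  using assms unfolding additive_biderivation_def inc_add_def by metis

lemma biderivation_zero_right:
  fixes b :: "('a::order \<Rightarrow> 'a \<Rightarrow> 'r::comm_ring_1) \<Rightarrow> ('a \<Rightarrow> 'a \<Rightarrow> 'r) \<Rightarrow> ('a \<Rightarrow> 'a \<Rightarrow> 'r)"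
  assumes "additive_biderivation b" "\<alpha> \<in> incidence"
  shows "b \<alpha> (\<lambda>_ _. 0) = (\<lambda>_ _. 0)"
proof -
  have "b \<alpha> (inc_add (\<lambda>_ _. 0) (\<lambda>_ _. 0)) = inc_add (b \<alpha> (\<lambda>_ _. 0)) (b \<alpha> (\<lambda>_ _. 0))"
    using assms zero_in_incidence unfolding additive_biderivation_def by blast
  moreover have "inc_add (\<lambda>_ _. 0) (\<lambda>_ _. 0) = ((\<lambda>_ _. 0) :: 'a \<Rightarrow> 'a \<Rightarrow> 'r)"
    by (simp add: inc_add_def)
  ultimately show ?thesis by (auto simp: inc_add_def fun_eq_iff)
qed

lemma biderivation_idempotent_right_vanishes:
  fixes a p q :: "'a::order"
  assumes "locally_finite_poset TYPE('a)" "additive_biderivation b"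
    and "\<alpha> \<in> incidence" "p \<noteq> a" "q \<noteq> a"
  shows "b \<alpha> (inc_e a a) p q = (0::'r::comm_ring_1)"
proof -
  have "inc_mult (inc_e a a) (inc_e a a) = (inc_e a a :: 'a \<Rightarrow> 'a \<Rightarrow> 'r)"
    using assms(1) by (simp add: inc_mult_inc_e_inc_e)
  then show ?thesis
    using biderivation_mult_right_apply[OF assms(2,3) inc_e_in_incidence inc_e_in_incidence,
        of a a a a p q] assms
    by (simp add: inc_mult_inc_e_left inc_mult_inc_e_right locally_finite_posetD)
qed

lemma biderivation_idempotents_cancel:
  assumes "locally_finite_poset TYPE('a::order)" "additive_biderivation b"
    and "\<alpha> \<in> incidence" "x < y"
  shows "b \<alpha> (inc_e x x) x y = - (b \<alpha> (inc_e y y) x (y::'a) :: 'r::comm_ring_1)"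
proof -
  have "b \<alpha> (inc_mult (inc_e x x) (inc_e y y)) x y = b \<alpha> (inc_e y y) x y + b \<alpha> (inc_e x x) x y"
    using biderivation_mult_right_apply[OF assms(2,3) inc_e_in_incidence inc_e_in_incidence,
        of x x y y x y] assms less_imp_le[OF assms(4)]
    by (simp add: inc_mult_inc_e_left inc_mult_inc_e_right locally_finite_posetD)
  moreover have "b \<alpha> (inc_mult (inc_e x x) (inc_e y y)) x y = 0"
    using assms biderivation_zero_right[OF assms(2,3)] by (auto simp: inc_mult_inc_e_inc_e)
  ultimately show ?thesis by (simp add: eq_neg_iff_add_eq_0 add.commute)
qed

lemma biderivation_inc_e_left_split:
  assumes "locally_finite_poset TYPE('a::order)" "additive_biderivation b"
    and "\<gamma> \<in> incidence" "x \<le> y" "y \<le> z"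
  shows "b (inc_e x z) \<gamma> x z = b (inc_e y z) \<gamma> y z + b (inc_e x y) \<gamma> x (y::'a)"
proof -
  have "inc_e x z = (inc_mult (inc_e x y) (inc_e y z) :: 'a \<Rightarrow> 'a \<Rightarrow> 'r::comm_ring_1)"
    using assms by (simp add: inc_mult_inc_e_inc_e)
  then show ?thesis
    unfolding \<open>inc_e x z = _\<close>
    using biderivation_mult_left_apply[OF assms(2) inc_e_in_incidence inc_e_in_incidence assms(3),
        of x y y z x z] assms
    by (simp add: inc_mult_inc_e_left inc_mult_inc_e_right locally_finite_posetD)
qed

lemma biderivation_inc_e_diagonal_right_eq:
  fixes x y z :: "'a::order"
  assumes "locally_finite_poset TYPE('a)" "additive_biderivation b" "x < y" "y < z"
  shows "b (inc_e x y) (inc_e x x) x y = b (inc_e y z) (inc_e y y) y z \<and>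
    b (inc_e y z) (inc_e y y) y z = (b (inc_e x z) (inc_e x x) x z :: 'r::comm_ring_1)"
proof -
  have yz_xx: "b (inc_e y z) (inc_e x x) y z = 0"
    using assms by (intro biderivation_idempotent_right_vanishes inc_e_in_incidence) auto
  have xz_yy: "b (inc_e x z) (inc_e y y) x z = 0"
    using assms by (intro biderivation_idempotent_right_vanishes inc_e_in_incidence) auto
  have split_xx: "b (inc_e x z) (inc_e x x) x z = b (inc_e y z) (inc_e x x) y z + b (inc_e x y) (inc_e x x) x y"
    using assms by (intro biderivation_inc_e_left_split inc_e_in_incidence) auto
  have split_yy: "b (inc_e x z) (inc_e y y) x z = b (inc_e y z) (inc_e y y) y z + b (inc_e x y) (inc_e y y) x y"
    using assms by (intro biderivation_inc_e_left_split inc_e_in_incidence) auto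
  have "b (inc_e x y) (inc_e x x) x y = - b (inc_e x y) (inc_e y y) x y"
    using assms by (intro biderivation_idempotents_cancel inc_e_in_incidence) auto
  moreover have "b (inc_e y z) (inc_e y y) y z = - b (inc_e x y) (inc_e y y) x y"
    using split_yy xz_yy by (simp add: eq_neg_iff_add_eq_0)
  moreover have "b (inc_e x z) (inc_e x x) x z = - b (inc_e x y) (inc_e y y) x y"
    using split_xx yz_xx \<open>b (inc_e x y) (inc_e x x) x y = _\<close> by simp
  ultimately show ?thesis by simp
qed

theorem mainTheorem14:
  fixes b :: "('a::order \<Rightarrow> 'a \<Rightarrow> 'r::comm_ring_1) \<Rightarrow> ('a \<Rightarrow> 'a \<Rightarrow> 'r) \<Rightarrow> ('a \<Rightarrow> 'a \<Rightarrow> 'r)"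
    and x y z :: 'a
  assumes "locally_finite_poset TYPE('a)"
    and "additive_biderivation b"
    and "x < y" and "y < z"
  shows "(b (inc_e x y) (inc_e x x) x y = b (inc_e y z) (inc_e y y) y z \<and>
          b (inc_e y z) (inc_e y y) y z = b (inc_e x z) (inc_e x x) x z) \<and>
         (b (inc_e x x) (inc_e x y) x y = b (inc_e y y) (inc_e y z) y z \<and>
         b (inc_e y y) (inc_e y z) y z = b (inc_e x x) (inc_e x z) x z)"
  using biderivation_inc_e_diagonal_right_eq[OF assms]
    biderivation_inc_e_diagonal_right_eq[OF assms(1) additive_biderivation_swap[OF assms(2)] assms(3,4)]
  by simp

end
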